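(* Every polymatroid game possesses a pure Nash equilibrium. That is: let $N=\{1,\dots,n\}$ be a finite set of players and $E=\{1,\dots,m\}$ a finite set of resources; for each player $i$ let $f_i:2^E\to\mathbb{N}$ be an integral polymatroid rank function and $d_i\in\mathbb{N}$ with $d_i\le f_i(E)$, and let the strategy set of player $i$ be $X_i=\mathbb{B}_{f_i}(d_i)$; for each $i\in N,e\in E$ let $C_{i,e}:\mathbb{N}\times\mathbb{N}\to\mathbb{R}_+$ be regular, and let the private cost of player $i$ in profile $\vec x=(\vec x_j)_{j\in N}\in X_1\times\dots\times X_n$ be $\pi_i(\vec x)=\sum_{e\in E}C_{i,e}(x_{i,e};x_{-i,e})$ with $x_{-i,e}=\sum_{j\neq i}x_{j,e}$. Then there exists a profile $\vec x$ such that for every $i\in N$ and every $\vec y_i\in X_i$, $\pi_i(\vec x)\le\pi_i(\vec y_i,\vec x_{-i})$.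
   Context: $\mathbb{N}=\{0,1,2,\dots\}$. An integral polymatroid rank function is $f:2^E\to\mathbb{N}$ with $f(\emptyset)=0$, monotone ($f(U)\le f(V)$ for $U\subseteq V$) and submodular. $x_i(U)=\sum_{e\in U}x_{i,e}$; $\mathbb{B}_f(d)=\{\vec x\in\mathbb{N}^E: x(U)\le f(U)\ \forall U\subseteq E,\ x(E)=d\}$. For $C:\mathbb{N}\times\mathbb{N}\to\mathbb{R}$, $C^-(x;t)=C(x;t)-C(x-1;t)$ for $x\ge1$; $C$ is regular if $C^-(x;t)\le C^-(x;t+1)$ and $C^-(x;t+1)\le C^-(x+1;t)$ for all $x\ge1$, $t\in\mathbb{N}$. *)

theory Defs
  imports Complex_Main "HOL-Library.FuncSet"
begin

definition polymatroid_rank :: "'e set \<Rightarrow> ('e set \<Rightarrow> nat) \<Rightarrow> bool" where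
  "polymatroid_rank E f \<longleftrightarrow>
     f {} = 0 \<and>
     (\<forall>U V. U \<subseteq> V \<and> V \<subseteq> E \<longrightarrow> f U \<le> f V) \<and>
     (\<forall>U V. U \<subseteq> E \<and> V \<subseteq> E \<longrightarrow> f (U \<union> V) + f (U \<inter> V) \<le> f U + f V)"

definition base_set :: "'e set \<Rightarrow> ('e set \<Rightarrow> nat) \<Rightarrow> nat \<Rightarrow> ('e \<Rightarrow> nat) set" where
  "base_set E f d = {x \<in> E \<rightarrow>\<^sub>E UNIV.
      (\<forall>U. U \<subseteq> E \<longrightarrow> sum x U \<le> f U) \<and> sum x E = d}"

definition marg_cost :: "(nat \<Rightarrow> nat \<Rightarrow> real) \<Rightarrow> nat \<Rightarrow> nat \<Rightarrow> real" where
  "marg_cost C x t = C x t - C (x - 1) t"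

definition regular_cost :: "(nat \<Rightarrow> nat \<Rightarrow> real) \<Rightarrow> bool" where
  "regular_cost C \<longleftrightarrow>
     (\<forall>x t. x \<ge> 1 \<longrightarrow> marg_cost C x t \<le> marg_cost C x (t + 1) \<and>
                        marg_cost C x (t + 1) \<le> marg_cost C (x + 1) t)"

definition private_cost ::
  "nat set \<Rightarrow> 'e set \<Rightarrow> (nat \<Rightarrow> 'e \<Rightarrow> nat \<Rightarrow> nat \<Rightarrow> real) \<Rightarrow> (nat \<Rightarrow> 'e \<Rightarrow> nat) \<Rightarrow> nat \<Rightarrow> real" where
  "private_cost N E C x i = (\<Sum>e\<in>E. C i e (x i e) (\<Sum>j\<in>N - {i}. x j e))"

end

theory Submission
  imports Defs
begin

text \<open>Induction on the total demand. Optimality of a player's vector in the integral base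
  polytope against fixed loads of the others is local: by the exchange property of polymatroids it
  suffices that no unit can be moved between two resources at a profit, and regularity makes the
  marginal costs monotone. When one player's demand grows by one, its best response gains one unit
  on some resource \<open>e\<close> and remains a best response even if one unit of the others' load on \<open>e\<close>
  is discounted. Every other player sees one extra unit on \<open>e\<close>; a player that no longer responds
  best repairs this by moving a single unit from the marked resource to another resource, which
  becomes the new marked resource. Each such move strictly lowers a Rosenthal-type potential, so
  the cascade ends in a pure Nash equilibrium.\<close>

lemma sum_fun_upd_add:
  fixes h :: "'a \<Rightarrow> 'b::comm_monoid_add"
  assumes "finite U"
  shows "sum (h(a := v)) U + (if a \<in> U then h a else 0) = sum h U + (if a \<in> U then v else 0)"
proof (cases "a \<in> U")
  case True
  have "sum (h(a := v)) (U - {a}) = sum h (U - {a})"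
    by (rule sum.cong) auto
  then show ?thesis
    using sum.remove[OF assms True, of "h(a := v)"] sum.remove[OF assms True, of h] True
    by (simp add: ac_simps)
next
  case False
  then have "sum (h(a := v)) U = sum h U" by (intro sum.cong) auto
  then show ?thesis using False by simp
qed

definition move_unit :: "('e \<Rightarrow> nat) \<Rightarrow> 'e \<Rightarrow> 'e \<Rightarrow> 'e \<Rightarrow> nat" where
  "move_unit z a b = (z(a := z a - 1))(b := z b + 1)"

lemma move_unit_apply:
  "a \<noteq> b \<Longrightarrow> move_unit z a b a = z a - 1"
  "move_unit z a b b = z b + 1"
  "e \<noteq> a \<Longrightarrow> e \<noteq> b \<Longrightarrow> move_unit z a b e = z e"
  by (auto simp: move_unit_def)

lemma sum_move_unit:
  assumes "finite U" "a \<noteq> b" "1 \<le> z a"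
  shows "sum (move_unit z a b) U + (if a \<in> U then 1 else 0) = sum z U + (if b \<in> U then 1 else 0)"
  using sum_fun_upd_add[OF assms(1), of z a "z a - 1"]
    sum_fun_upd_add[OF assms(1), of "z(a := z a - 1)" b "z b + 1"] assms(2,3)
  unfolding move_unit_def by (auto split: if_splits)

lemma base_set_decrement:
  assumes "w \<in> base_set E f (Suc \<delta>)" "e \<in> E" "1 \<le> w e" "finite E"
  shows "w(e := w e - 1) \<in> base_set E f \<delta>"
proof -
  have "sum (w(e := w e - 1)) U \<le> sum w U" for U
    by (rule sum_mono) auto
  moreover have "sum (w(e := w e - 1)) E + w e = sum w E + (w e - 1)"
    using sum_fun_upd_add[OF assms(4), of w e "w e - 1"] assms(2) by simp
  ultimately show ?thesis using assms unfolding base_set_def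
    by (auto simp: PiE_def extensional_def intro: order_trans)
qed

lemma finite_base_set: "finite E \<Longrightarrow> finite (base_set E f \<delta>)"
proof -
  assume fE: "finite E"
  have "base_set E f \<delta> \<subseteq> PiE E (\<lambda>_. {..\<delta>})"
  proof
    fix x assume x: "x \<in> base_set E f \<delta>"
    have "x e \<le> \<delta>" if "e \<in> E" for e
      using member_le_sum[of e E x] x that fE unfolding base_set_def by auto
    then show "x \<in> PiE E (\<lambda>_. {..\<delta>})" using x unfolding base_set_def by (auto simp: PiE_def)
  qed
  moreover have "finite (PiE E (\<lambda>_. {..\<delta>}))" using fE by (intro finite_PiE) auto
  ultimately show ?thesis by (rule finite_subset)
qed

section \<open>Polymatroids and the exchange property\<close>

lemma Union_in_if_union_closed:
  assumes "finite F" "F \<noteq> {}" "F \<subseteq> G" "\<And>U V. U \<in> G \<Longrightarrow> V \<in> G \<Longrightarrow> U \<union> V \<in> G"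
  shows "\<Union>F \<in> G"
  using assms by (induction rule: finite_ne_induct) auto

lemma Inter_in_if_inter_closed:
  assumes "finite F" "F \<noteq> {}" "F \<subseteq> G" "\<And>U V. U \<in> G \<Longrightarrow> V \<in> G \<Longrightarrow> U \<inter> V \<in> G"
  shows "\<Inter>F \<in> G"
  using assms by (induction rule: finite_ne_induct) auto

locale polymatroid =
  fixes E :: "'e set" and g :: "'e set \<Rightarrow> nat"
  assumes finite_ground: "finite E" and rank: "polymatroid_rank E g"
begin

lemma rank_empty: "g {} = 0"
  using rank by (simp add: polymatroid_rank_def)

lemma rank_submodular: "U \<subseteq> E \<Longrightarrow> V \<subseteq> E \<Longrightarrow> g (U \<union> V) + g (U \<inter> V) \<le> g U + g V"
  using rank by (simp add: polymatroid_rank_def)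

definition indep :: "('e \<Rightarrow> nat) \<Rightarrow> bool" where
  "indep x \<longleftrightarrow> (\<forall>U. U \<subseteq> E \<longrightarrow> sum x U \<le> g U)"

definition tight :: "('e \<Rightarrow> nat) \<Rightarrow> 'e set \<Rightarrow> bool" where
  "tight x U \<longleftrightarrow> U \<subseteq> E \<and> sum x U = g U"

abbreviation bases :: "('e \<Rightarrow> nat) set" where
  "bases \<equiv> base_set E g (g E)"

lemma bases_iff: "x \<in> bases \<longleftrightarrow> x \<in> E \<rightarrow>\<^sub>E UNIV \<and> indep x \<and> sum x E = g E"
  by (auto simp: base_set_def indep_def)

lemma tight_empty: "tight x {}"
  by (simp add: tight_def rank_empty)

lemma tight_Un_Int:
  assumes "indep x" "tight x U" "tight x V"
  shows "tight x (U \<union> V)" "tight x (U \<inter> V)"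
proof -
  have sub: "U \<union> V \<subseteq> E" "U \<inter> V \<subseteq> E" using assms unfolding tight_def by auto
  have "finite U" "finite V" using sub finite_ground by (auto intro: finite_subset)
  then have "sum x (U \<union> V) + sum x (U \<inter> V) = sum x U + sum x V"
    by (rule sum.union_inter)
  moreover have "g (U \<union> V) + g (U \<inter> V) \<le> g U + g V"
    using rank_submodular assms unfolding tight_def by auto
  moreover have "sum x (U \<union> V) \<le> g (U \<union> V)" "sum x (U \<inter> V) \<le> g (U \<inter> V)"
    using assms(1) sub unfolding indep_def by auto
  ultimately show "tight x (U \<union> V)" "tight x (U \<inter> V)"
    using assms sub unfolding tight_def by auto
qed

lemma tight_greatest:
  assumes "indep x" "P {}" "\<And>U V. P U \<Longrightarrow> P V \<Longrightarrow> P (U \<union> V)"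
  shows "\<exists>W. tight x W \<and> P W \<and> (\<forall>U. tight x U \<and> P U \<longrightarrow> U \<subseteq> W)"
proof -
  let ?F = "{U. tight x U \<and> P U}"
  have "?F \<subseteq> Pow E" by (auto simp: tight_def)
  then have "finite ?F" using finite_ground by (auto intro: finite_subset)
  moreover have "{} \<in> ?F" using tight_empty assms(2) by simp
  ultimately have "\<Union>?F \<in> ?F"
    using Union_in_if_union_closed[of ?F ?F] tight_Un_Int(1)[OF assms(1)] assms(3) by blast
  then show ?thesis by blast
qed

lemma tight_least_containing:
  assumes "indep x" "tight x E" "u \<in> E"
  shows "\<exists>A. tight x A \<and> u \<in> A \<and> (\<forall>U. tight x U \<and> u \<in> U \<longrightarrow> A \<subseteq> U)"
proof -
  let ?F = "{U. tight x U \<and> u \<in> U}"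
  have "?F \<subseteq> Pow E" by (auto simp: tight_def)
  then have "finite ?F" using finite_ground by (auto intro: finite_subset)
  moreover have "E \<in> ?F" using assms(2,3) by simp
  ultimately have "\<Inter>?F \<in> ?F"
    using Inter_in_if_inter_closed[of ?F ?F] tight_Un_Int(2)[OF assms(1)] by blast
  then show ?thesis by blast
qed

lemma indep_increment_exists:
  assumes "indep x" "sum x E < g E"
  shows "\<exists>e\<in>E. indep (x(e := x e + 1))"
proof -
  obtain W where W: "tight x W" and greatest: "\<And>U. tight x U \<Longrightarrow> U \<subseteq> W"
    using tight_greatest[OF assms(1), of "\<lambda>_. True"] by blast
  have "W \<noteq> E" using W assms(2) unfolding tight_def by auto
  then obtain e where e: "e \<in> E" "e \<notin> W" using W unfolding tight_def by auto
  have "sum (x(e := x e + 1)) U \<le> g U" if U: "U \<subseteq> E" for U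
  proof -
    have "finite U" using U finite_ground by (auto intro: finite_subset)
    from sum_fun_upd_add[OF this, of x e "x e + 1"]
    have sum_eq: "sum (x(e := x e + 1)) U = sum x U + (if e \<in> U then 1 else 0)" by auto
    have "sum x U \<le> g U" using assms(1) U unfolding indep_def by auto
    moreover have "sum x U \<noteq> g U" if "e \<in> U"
      using greatest[of U] e U that unfolding tight_def by blast
    ultimately show ?thesis using sum_eq by auto
  qed
  then show ?thesis using e unfolding indep_def by blast
qed

lemma move_unit_in_bases:
  assumes x: "x \<in> bases" and ab: "a \<in> E" "b \<in> E" "a \<noteq> b" "1 \<le> x b"
    and untight: "\<And>U. tight x U \<Longrightarrow> a \<in> U \<Longrightarrow> b \<in> U"
  shows "move_unit x b a \<in> bases"
proof -
  have x': "indep x" "sum x E = g E" "x \<in> E \<rightarrow>\<^sub>E UNIV" using x bases_iff by auto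
  have "sum (move_unit x b a) U \<le> g U" if U: "U \<subseteq> E" for U
  proof -
    have "finite U" using U finite_ground by (auto intro: finite_subset)
    from sum_move_unit[OF this, of b a x]
    have sum_eq: "sum (move_unit x b a) U + (if b \<in> U then 1 else 0) = sum x U + (if a \<in> U then 1 else 0)"
      using ab by auto
    have "sum x U \<le> g U" using x' U unfolding indep_def by auto
    moreover have "sum x U \<noteq> g U" if "a \<in> U" "b \<notin> U"
      using untight[of U] U that unfolding tight_def by blast
    ultimately show ?thesis using sum_eq by (auto split: if_splits)
  qed
  moreover have "sum (move_unit x b a) E = g E"
    using sum_move_unit[OF finite_ground, of b a x] ab x' by auto
  moreover have "move_unit x b a \<in> E \<rightarrow>\<^sub>E UNIV"
    using x'(3) ab unfolding move_unit_def by (auto simp: PiE_def extensional_def)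
  ultimately show ?thesis using bases_iff indep_def by auto
qed

lemma bases_exchange:
  assumes y: "y \<in> bases" and z: "z \<in> bases" and u: "u \<in> E" "z u < y u"
  shows "\<exists>v\<in>E. y v < z v \<and> move_unit y u v \<in> bases \<and> move_unit z v u \<in> bases"
proof -
  have y': "indep y" "sum y E = g E" and z': "indep z" "sum z E = g E"
    using y z bases_iff by auto
  obtain A where A: "tight z A" "u \<in> A" and least: "\<And>U. tight z U \<Longrightarrow> u \<in> U \<Longrightarrow> A \<subseteq> U"
    using tight_least_containing[OF z'(1) _ u(1)] z'(2) by (auto simp: tight_def)
  obtain W where W: "tight y W" "u \<notin> W" and greatest: "\<And>U. tight y U \<Longrightarrow> u \<notin> U \<Longrightarrow> U \<subseteq> W"
    using tight_greatest[OF y'(1), of "\<lambda>U. u \<notin> U"] by auto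
  have AE: "A \<subseteq> E" and WE: "W \<subseteq> E" using A W by (auto simp: tight_def)
  have fin: "finite A" "finite W" using AE WE finite_ground by (auto intro: finite_subset)
  have "\<exists>v\<in>A - W. y v < z v"
  proof (rule ccontr)
    \<comment> \<open>otherwise \<open>y\<close> would overload \<open>A \<union> W\<close>, by submodularity on the tight sets
      \<open>A\<close> of \<open>z\<close> and \<open>W\<close> of \<open>y\<close>\<close>
    assume "\<not> ?thesis"
    then have "sum z (A - W) < sum y (A - W)"
      using fin A W u by (intro sum_strict_mono_ex1) (auto simp: not_less)
    moreover have "g (A \<union> W) + g (A \<inter> W) \<le> g A + g W" using rank_submodular AE WE by auto
    moreover have "A \<union> W \<subseteq> E" "A \<inter> W \<subseteq> E" using AE WE by auto
    then have "sum y (A \<union> W) \<le> g (A \<union> W)" "sum z (A \<inter> W) \<le> g (A \<inter> W)"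
      using y'(1) z'(1) unfolding indep_def by blast+
    moreover have "sum y (A \<union> W) = sum y W + sum y (A - W)"
      using sum.union_disjoint[of W "A - W" y] fin by (simp add: Un_commute)
    moreover have "sum z A = sum z (A \<inter> W) + sum z (A - W)"
      using sum.Int_Diff[OF fin(1), of z W] by simp
    ultimately show False using A W unfolding tight_def by linarith
  qed
  then obtain v where v: "v \<in> A" "v \<notin> W" "y v < z v" by blast
  have vE: "v \<in> E" and vu: "v \<noteq> u" using v AE u by auto
  have "move_unit z v u \<in> bases"
    using least v by (intro move_unit_in_bases[OF z u(1) vE vu[symmetric]]) auto
  moreover have "move_unit y u v \<in> bases"
    using greatest v u by (intro move_unit_in_bases[OF y vE u(1) vu]) auto
  ultimately show ?thesis using v vE by blast
qed

lemma bases_double_exchange: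
  assumes z: "z \<in> bases" and w: "move_unit (move_unit z c e) a b \<in> bases"
    and b: "b \<in> E" and ne: "c \<noteq> e" "a \<noteq> e" "a \<noteq> b" "b \<noteq> c"
    and pos: "1 \<le> z c" "1 \<le> move_unit z c e a"
  shows "(move_unit z c b \<in> bases \<and> move_unit z a e \<in> bases) \<or> move_unit z a b \<in> bases"
proof -
  let ?w = "move_unit (move_unit z c e) a b"
  have "z b < ?w b" using ne by (auto simp: move_unit_def)
  then obtain v where v: "?w v < z v" "move_unit ?w b v \<in> bases" "move_unit z v b \<in> bases"
    using bases_exchange[OF w z b] by blast
  \<comment> \<open>the exchange partner of \<open>b\<close> must be one of the two resources that lost a unit\<close>
  have "v = c \<or> v = a" using v(1) by (auto simp: move_unit_def split: if_splits)
  moreover have "move_unit ?w b c = move_unit z a e" if "a \<noteq> c"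
    using ne pos that by (auto simp: move_unit_def fun_eq_iff)
  ultimately show ?thesis using v by (cases "a = c") auto
qed

lemma base_set_increment_exists:
  assumes z: "z \<in> base_set E g \<delta>" and less: "\<delta> < g E"
  shows "\<exists>e\<in>E. z(e := z e + 1) \<in> base_set E g (\<delta> + 1)"
proof -
  have "indep z" "sum z E = \<delta>" using z unfolding base_set_def indep_def by auto
  then obtain e where e: "e \<in> E" "indep (z(e := z e + 1))"
    using indep_increment_exists less by auto
  moreover have "sum (z(e := z e + 1)) E = \<delta> + 1"
    using sum_fun_upd_add[OF finite_ground, of z e "z e + 1"] e \<open>sum z E = \<delta>\<close> by simp
  moreover have "z(e := z e + 1) \<in> E \<rightarrow>\<^sub>E UNIV"
    using z e unfolding base_set_def by (auto simp: PiE_def extensional_def)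
  ultimately show ?thesis unfolding base_set_def indep_def by auto
qed

end

section \<open>Separable costs with regular marginals\<close>

lemma regular_cost_load_step:
  "regular_cost C \<Longrightarrow> 1 \<le> x \<Longrightarrow> marg_cost C x t \<le> marg_cost C x (t + 1)"
  by (simp add: regular_cost_def)

lemma regular_cost_shift:
  "regular_cost C \<Longrightarrow> 1 \<le> x \<Longrightarrow> marg_cost C x (t + 1) \<le> marg_cost C (x + 1) t"
  by (simp add: regular_cost_def)

lemma regular_cost_mono_load:
  assumes "regular_cost C" "1 \<le> x" "s \<le> t"
  shows "marg_cost C x s \<le> marg_cost C x t"
  using assms(3)
proof (induction t rule: dec_induct)
  case (step k)
  then show ?case using regular_cost_load_step[OF assms(1,2), of k] by simp
qed simp

lemma regular_cost_mono_amount: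
  assumes "regular_cost C" "1 \<le> x" "x \<le> y"
  shows "marg_cost C x t \<le> marg_cost C y t"
  using assms(3)
proof (induction y rule: dec_induct)
  case (step k)
  then have "marg_cost C k t \<le> marg_cost C (k + 1) t"
    using regular_cost_load_step[OF assms(1), of k t] regular_cost_shift[OF assms(1), of k t] assms(2)
    by linarith
  then show ?case using step.IH by simp
qed simp

lemma regular_cost_shift_down:
  assumes "regular_cost C" "1 \<le> x"
  shows "marg_cost C x t \<le> marg_cost C (x + 1) (t - 1)"
proof (cases t)
  case 0
  then show ?thesis using regular_cost_mono_amount[OF assms] by simp
next
  case (Suc s)
  then show ?thesis using regular_cost_shift[OF assms] by simp
qed

definition sep_cost :: "'e set \<Rightarrow> ('e \<Rightarrow> nat \<Rightarrow> nat \<Rightarrow> real) \<Rightarrow> ('e \<Rightarrow> nat) \<Rightarrow> ('e \<Rightarrow> nat) \<Rightarrow> real" where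
  "sep_cost E K \<tau> z = (\<Sum>e\<in>E. K e (z e) (\<tau> e))"

definition marginal :: "('e \<Rightarrow> nat \<Rightarrow> nat \<Rightarrow> real) \<Rightarrow> ('e \<Rightarrow> nat) \<Rightarrow> 'e \<Rightarrow> nat \<Rightarrow> real" where
  "marginal K \<tau> e k = marg_cost (K e) k (\<tau> e)"

definition is_optimal ::
  "'e set \<Rightarrow> ('e \<Rightarrow> nat) set \<Rightarrow> ('e \<Rightarrow> nat \<Rightarrow> nat \<Rightarrow> real) \<Rightarrow> ('e \<Rightarrow> nat) \<Rightarrow> ('e \<Rightarrow> nat) \<Rightarrow> bool" where
  "is_optimal E X K \<tau> z \<longleftrightarrow> z \<in> X \<and> (\<forall>y\<in>X. sep_cost E K \<tau> z \<le> sep_cost E K \<tau> y)"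

definition is_locally_optimal ::
  "'e set \<Rightarrow> ('e \<Rightarrow> nat) set \<Rightarrow> ('e \<Rightarrow> nat \<Rightarrow> nat \<Rightarrow> real) \<Rightarrow> ('e \<Rightarrow> nat) \<Rightarrow> ('e \<Rightarrow> nat) \<Rightarrow> bool" where
  "is_locally_optimal E X K \<tau> z \<longleftrightarrow> (\<forall>a\<in>E. \<forall>b\<in>E. a \<noteq> b \<longrightarrow> 1 \<le> z a \<longrightarrow> move_unit z a b \<in> X \<longrightarrow>
      marginal K \<tau> a (z a) \<le> marginal K \<tau> b (z b + 1))"

lemma marginal_fun_upd:
  "marginal K (\<tau>(c := t)) e k = (if e = c then marg_cost (K c) k t else marginal K \<tau> e k)"
  by (simp add: marginal_def)

lemma sep_cost_move_unit:
  assumes "finite E" "a \<in> E" "b \<in> E" "a \<noteq> b" "1 \<le> z a"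
  shows "sep_cost E K \<tau> (move_unit z a b) = sep_cost E K \<tau> z - marginal K \<tau> a (z a) + marginal K \<tau> b (z b + 1)"
proof -
  have split: "sum h E = h a + h b + sum h (E - {a, b})" for h :: "_ \<Rightarrow> real"
    using sum.remove[OF assms(1,2), of h] sum.remove[of "E - {a}" b h] assms
    by (simp add: insert_commute set_diff_eq)
  have "(\<Sum>e\<in>E - {a, b}. K e (move_unit z a b e) (\<tau> e)) = (\<Sum>e\<in>E - {a, b}. K e (z e) (\<tau> e))"
    by (rule sum.cong) (auto simp: move_unit_apply)
  then show ?thesis
    using split[of "\<lambda>e. K e (move_unit z a b e) (\<tau> e)"] split[of "\<lambda>e. K e (z e) (\<tau> e)"] assms(4,5)
    by (simp add: sep_cost_def marginal_def marg_cost_def move_unit_apply)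
qed

lemma optimal_imp_locally_optimal:
  assumes "finite E" "is_optimal E X K \<tau> z"
  shows "is_locally_optimal E X K \<tau> z"
  unfolding is_locally_optimal_def
proof (intro ballI impI)
  fix a b assume ab: "a \<in> E" "b \<in> E" "a \<noteq> b" "1 \<le> z a" "move_unit z a b \<in> X"
  then have "sep_cost E K \<tau> z \<le> sep_cost E K \<tau> (move_unit z a b)"
    using assms(2) unfolding is_optimal_def by blast
  then show "marginal K \<tau> a (z a) \<le> marginal K \<tau> b (z b + 1)"
    using sep_cost_move_unit[of E a b z K \<tau>] assms(1) ab by simp
qed

section \<open>Optimal bases and their sensitivity to loads\<close>

locale regular_polymatroid = polymatroid E g for E :: "'e set" and g +
  fixes K :: "'e \<Rightarrow> nat \<Rightarrow> nat \<Rightarrow> real"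
  assumes regular: "\<And>e. e \<in> E \<Longrightarrow> regular_cost (K e)"
begin

lemma marginal_mono_amount:
  "e \<in> E \<Longrightarrow> 1 \<le> k \<Longrightarrow> k \<le> l \<Longrightarrow> marginal K \<tau> e k \<le> marginal K \<tau> e l"
  unfolding marginal_def using regular_cost_mono_amount[OF regular] by blast

lemma locally_optimal_imp_optimal:
  assumes z: "z \<in> bases" and lo: "is_locally_optimal E bases K \<tau> z"
  shows "is_optimal E bases K \<tau> z"
proof -
  define dist where "dist y = (\<Sum>e\<in>E. (y e - z e) + (z e - y e))" for y :: "'e \<Rightarrow> nat"
  have "sep_cost E K \<tau> z \<le> sep_cost E K \<tau> y" if "y \<in> bases" for y
    using that
  proof (induction "dist y" arbitrary: y rule: less_induct)
    case less
    show ?case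
    proof (cases "\<exists>u\<in>E. z u < y u")
      case True
      then obtain u where u: "u \<in> E" "z u < y u" by blast
      obtain v where v: "v \<in> E" "y v < z v" "move_unit y u v \<in> bases" "move_unit z v u \<in> bases"
        using bases_exchange[OF less.prems z u] by blast
      have vu: "v \<noteq> u" using u v by auto
      have "dist (move_unit y u v) < dist y"
        unfolding dist_def
      proof (rule sum_strict_mono_ex1[OF finite_ground])
        show "\<forall>x\<in>E. move_unit y u v x - z x + (z x - move_unit y u v x) \<le> y x - z x + (z x - y x)"
          using u v vu by (auto simp: move_unit_def)
        show "\<exists>a\<in>E. move_unit y u v a - z a + (z a - move_unit y u v a) < y a - z a + (z a - y a)"
          using u v vu by (auto simp: move_unit_def intro!: bexI[of _ u])
      qed
      then have "sep_cost E K \<tau> z \<le> sep_cost E K \<tau> (move_unit y u v)"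
        using less.hyps v(3) by blast
      also have "\<dots> = sep_cost E K \<tau> y - marginal K \<tau> u (y u) + marginal K \<tau> v (y v + 1)"
        using sep_cost_move_unit[of E u v y K \<tau>] finite_ground u v vu by simp
      also have "\<dots> \<le> sep_cost E K \<tau> y"
      proof -
        have "marginal K \<tau> v (y v + 1) \<le> marginal K \<tau> v (z v)"
          using marginal_mono_amount v by simp
        also have "\<dots> \<le> marginal K \<tau> u (z u + 1)"
          using lo v u vu unfolding is_locally_optimal_def by auto
        also have "\<dots> \<le> marginal K \<tau> u (y u)"
          using marginal_mono_amount u by simp
        finally show ?thesis by simp
      qed
      finally show ?thesis .
    next
      case False
      have "sum y E = sum z E" using less.prems z bases_iff by simp
      have "y e = z e" if "e \<in> E" for e
        using \<open>sum y E = sum z E\<close> sum_mono_inv[of y E z e] False that finite_ground by force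
      then show ?thesis unfolding sep_cost_def by (simp cong: sum.cong)
    qed
  qed
  then show ?thesis using z unfolding is_optimal_def by blast
qed

lemma optimal_iff_locally_optimal:
  "is_optimal E bases K \<tau> z \<longleftrightarrow> z \<in> bases \<and> is_locally_optimal E bases K \<tau> z"
  using locally_optimal_imp_optimal optimal_imp_locally_optimal[OF finite_ground] is_optimal_def
  by blast

lemma marginal_load_increase:
  "e \<in> E \<Longrightarrow> 1 \<le> k \<Longrightarrow> marginal K \<tau> e k \<le> marg_cost (K e) k (\<tau> e + 1)"
  unfolding marginal_def using regular_cost_load_step[OF regular] by blast

lemma marginal_load_shift:
  "e \<in> E \<Longrightarrow> 1 \<le> k \<Longrightarrow> marg_cost (K e) k (\<tau> e + 1) \<le> marginal K \<tau> e (k + 1)"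
  unfolding marginal_def using regular_cost_shift[OF regular] by blast

lemma optimal_move_unit_unload:
  assumes oy: "is_optimal E bases K \<sigma> y"
    and oy': "is_optimal E bases K (\<sigma>(c := \<sigma> c + 1)) (move_unit y c e)"
    and ce: "c \<in> E" "e \<in> E" "c \<noteq> e" and yc: "1 \<le> y c"
  shows "is_optimal E bases K ((\<sigma>(c := \<sigma> c + 1))(e := \<sigma> e - 1)) (move_unit y c e)"
proof (cases "\<sigma> e = 0")
  case True
  then show ?thesis using oy' ce by (simp add: fun_upd_idem)
next
  case False
  define \<rho> where "\<rho> = \<sigma>(c := \<sigma> c + 1)"
  define y' where "y' = move_unit y c e"
  have y: "y \<in> bases" and loy: "is_locally_optimal E bases K \<sigma> y"
    using oy optimal_iff_locally_optimal by auto
  have y'B: "y' \<in> bases" and loy': "is_locally_optimal E bases K \<rho> y'"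
    using oy' optimal_iff_locally_optimal unfolding \<rho>_def y'_def by auto
  have y'c: "y' c = y c - 1" and y'e: "y' e = y e + 1" and y'o: "\<And>x. x \<noteq> c \<Longrightarrow> x \<noteq> e \<Longrightarrow> y' x = y x"
    using ce unfolding y'_def by (auto simp: move_unit_apply)
  have "is_locally_optimal E bases K (\<rho>(e := \<sigma> e - 1)) y'"
    unfolding is_locally_optimal_def
  proof (intro ballI impI)
    fix a b assume ab: "a \<in> E" "b \<in> E" "a \<noteq> b" "1 \<le> y' a" "move_unit y' a b \<in> bases"
    have lo': "marginal K \<rho> a (y' a) \<le> marginal K \<rho> b (y' b + 1)"
      using loy' ab unfolding is_locally_optimal_def by blast
    consider "a = e" | "a \<noteq> e" "b = e" | "a \<noteq> e" "b \<noteq> e" by blast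
    then show "marginal K (\<rho>(e := \<sigma> e - 1)) a (y' a) \<le> marginal K (\<rho>(e := \<sigma> e - 1)) b (y' b + 1)"
    proof cases
      case 1
      have "marg_cost (K e) (y' e) (\<sigma> e - 1) \<le> marg_cost (K e) (y' e) (\<sigma> e)"
        using regular_cost_mono_load[OF regular[OF ce(2)]] y'e by simp
      then show ?thesis using lo' 1 ab ce by (simp add: marginal_def \<rho>_def)
    next
      case 2
      have "marginal K \<rho> a (y' a) \<le> marginal K \<sigma> e (y e + 1)"
      proof (cases "a = c")
        case True
        have "marginal K \<rho> c (y' c) = marg_cost (K c) (y c - 1) (\<sigma> c + 1)"
          using y'c unfolding \<rho>_def by (simp add: marginal_def)
        also have "\<dots> \<le> marginal K \<sigma> c (y c)"
          using marginal_load_shift[OF ce(1), of "y c - 1" \<sigma>] ab True y'c by simp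
        also have "\<dots> \<le> marginal K \<sigma> e (y e + 1)"
          using loy ce yc y'B unfolding is_locally_optimal_def y'_def by blast
        finally show ?thesis using True by simp
      next
        case False
        have "move_unit y a e \<in> bases"
          using bases_double_exchange[of y c e a e] y ab 2 False ce yc unfolding y'_def by auto
        then show ?thesis
          using loy ab 2 False y'o ce unfolding is_locally_optimal_def \<rho>_def
          by (auto simp: marginal_fun_upd)
      qed
      also have "\<dots> \<le> marg_cost (K e) (y e + 2) (\<sigma> e - 1)"
        using regular_cost_shift_down[OF regular[OF ce(2)], of "y e + 1" "\<sigma> e"]
        by (simp add: marginal_def)
      finally show ?thesis using 2 ab y'e by (simp add: marginal_fun_upd \<rho>_def)
    next
      case 3
      then show ?thesis using lo' by (simp add: marginal_fun_upd)
    qed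
  qed
  then show ?thesis using y'B optimal_iff_locally_optimal unfolding \<rho>_def y'_def by auto
qed

lemma locally_optimal_after_shift:
  assumes z: "z \<in> bases" and lo: "is_locally_optimal E bases K \<sigma> z"
    and ce: "c \<in> E" "e \<in> E" "e \<noteq> c" and zc: "1 \<le> z c" and ze: "move_unit z c e \<in> bases"
    and least: "\<And>b. b \<in> E \<Longrightarrow> b \<noteq> c \<Longrightarrow> move_unit z c b \<in> bases \<Longrightarrow>
      marginal K \<sigma> e (z e + 1) \<le> marginal K \<sigma> b (z b + 1)"
    and below: "marginal K \<sigma> e (z e + 1) \<le> marg_cost (K c) (z c) (\<sigma> c + 1)"
  shows "is_locally_optimal E bases K (\<sigma>(c := \<sigma> c + 1)) (move_unit z c e)"
  unfolding is_locally_optimal_def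
proof (intro ballI impI)
  define \<rho> where "\<rho> = \<sigma>(c := \<sigma> c + 1)"
  define y where "y = move_unit z c e"
  have yc: "y c = z c - 1" and ye: "y e = z e + 1" and yo: "\<And>x. x \<noteq> c \<Longrightarrow> x \<noteq> e \<Longrightarrow> y x = z x"
    using ce unfolding y_def by (auto simp: move_unit_apply)
  have \<rho>: "\<And>x k. marginal K \<rho> x k = (if x = c then marg_cost (K c) k (\<sigma> c + 1) else marginal K \<sigma> x k)"
    unfolding \<rho>_def by (simp add: marginal_fun_upd)
  have lz: "marginal K \<sigma> a (z a) \<le> marginal K \<sigma> b (z b + 1)"
    if "a \<in> E" "b \<in> E" "a \<noteq> b" "1 \<le> z a" "move_unit z a b \<in> bases" for a b
    using lo that unfolding is_locally_optimal_def by blast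
  have e_up: "marginal K \<sigma> e (z e + 1) \<le> marginal K \<sigma> e (z e + 2)"
    using marginal_mono_amount[OF ce(2)] by simp
  fix a b assume ab: "a \<in> E" "b \<in> E" "a \<noteq> b" "1 \<le> y a" "move_unit y a b \<in> bases"
  have double: "(move_unit z c b \<in> bases \<and> move_unit z a e \<in> bases) \<or> move_unit z a b \<in> bases"
    if "a \<noteq> e" "b \<noteq> c"
    using bases_double_exchange[of z c e a b] z ab ce zc that unfolding y_def by auto
  consider "a = c" | "a = e" | "a \<noteq> c" "a \<noteq> e" by blast
  then show "marginal K \<rho> a (y a) \<le> marginal K \<rho> b (y b + 1)"
  proof cases
    case 1
    have "marginal K \<rho> c (y c) \<le> marginal K \<sigma> c (z c)"
      using marginal_load_shift[OF ce(1), of "z c - 1" \<sigma>] \<rho> ab 1 yc zc by simp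
    moreover have "marginal K \<sigma> c (z c) \<le> marginal K \<rho> b (y b + 1)"
    proof (cases "b = e")
      case True
      then show ?thesis using lz[OF ce(1,2) ce(3)[symmetric] zc ze] e_up \<rho> ye ce by simp
    next
      case False
      then show ?thesis using double lz[OF ce(1) ab(2)] \<rho> yo ab 1 zc ce by auto
    qed
    ultimately show ?thesis using 1 by simp
  next
    case 2
    show ?thesis
    proof (cases "b = c")
      case True
      then show ?thesis using below \<rho> 2 ye yc zc ce by simp
    next
      case False
      have "move_unit y e b = move_unit z c b"
        using False ab 2 ce zc unfolding y_def by (auto simp: move_unit_def fun_eq_iff)
      then show ?thesis using least[of b] \<rho> ab 2 False ye yo ce by simp
    qed
  next
    case 3
    have za: "y a = z a" "1 \<le> z a" using yo 3 ab by auto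
    have via_e: "marginal K \<sigma> a (z a) \<le> marginal K \<sigma> e (z e + 1)" if "move_unit z a e \<in> bases"
      using lz[OF ab(1) ce(2) 3(2) za(2) that] .
    consider "b = c" | "b = e" | "b \<noteq> c" "b \<noteq> e" by blast
    then show ?thesis
    proof cases
      case 1
      have "move_unit y a c = move_unit z a e"
        using 1 3 ce zc unfolding y_def by (auto simp: move_unit_def fun_eq_iff)
      then show ?thesis using via_e below \<rho> ab 1 3 za yc zc by simp
    next
      case 2
      then show ?thesis using double via_e e_up \<rho> ab 3 za ye ce by auto
    next
      case b: 3
      then show ?thesis using double via_e least[of b] lz[OF ab(1,2,3) za(2)] \<rho> ab 3 za yo by fastforce
    qed
  qed
qed

lemma optimal_after_load_increase:
  assumes oz: "is_optimal E bases K \<sigma> z" and c: "c \<in> E"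
    and not_opt: "\<not> is_optimal E bases K (\<sigma>(c := \<sigma> c + 1)) z"
  shows "\<exists>e\<in>E. e \<noteq> c \<and> 1 \<le> z c \<and> is_optimal E bases K (\<sigma>(c := \<sigma> c + 1)) (move_unit z c e)"
proof -
  define \<rho> where "\<rho> = \<sigma>(c := \<sigma> c + 1)"
  have z: "z \<in> bases" and lo: "is_locally_optimal E bases K \<sigma> z"
    using oz optimal_iff_locally_optimal by auto
  have "\<not> is_locally_optimal E bases K \<rho> z"
    using not_opt z optimal_iff_locally_optimal unfolding \<rho>_def by auto
  then obtain a b where ab: "a \<in> E" "b \<in> E" "a \<noteq> b" "1 \<le> z a" "move_unit z a b \<in> bases"
    and violated: "marginal K \<rho> b (z b + 1) < marginal K \<rho> a (z a)"
    unfolding is_locally_optimal_def by (auto simp: not_le)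
  have "marginal K \<sigma> a (z a) \<le> marginal K \<sigma> b (z b + 1)"
    using lo ab unfolding is_locally_optimal_def by blast
  moreover have "marginal K \<sigma> b (z b + 1) \<le> marginal K \<rho> b (z b + 1)"
    using marginal_load_increase[OF c] unfolding \<rho>_def by (simp add: marginal_fun_upd)
  \<comment> \<open>only the marginal costs on \<open>c\<close> went up, so the violated exchange takes a unit from \<open>c\<close>\<close>
  ultimately have ac: "a = c"
    using violated unfolding \<rho>_def by (auto simp: marginal_fun_upd split: if_splits)
  let ?G = "\<lambda>e. marginal K \<sigma> e (z e + 1)"
  let ?targets = "{e \<in> E. e \<noteq> c \<and> move_unit z c e \<in> bases}"
  have "b \<in> ?targets" using ab ac by auto
  moreover have "finite ?targets" using finite_ground by simp
  ultimately obtain e where e: "e \<in> ?targets" and least: "\<And>b. b \<in> ?targets \<Longrightarrow> ?G e \<le> ?G b"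
    using ex_is_arg_min_if_finite[of ?targets ?G] unfolding is_arg_min_linorder by blast
  have "?G e \<le> marg_cost (K c) (z c) (\<sigma> c + 1)"
    using least[of b] \<open>b \<in> ?targets\<close> violated ab ac unfolding \<rho>_def by (simp add: marginal_fun_upd)
  then have "is_locally_optimal E bases K \<rho> (move_unit z c e)"
    using locally_optimal_after_shift[OF z lo c] e least ab ac unfolding \<rho>_def by auto
  then show ?thesis
    using e ab ac optimal_iff_locally_optimal unfolding \<rho>_def by auto
qed

end

section \<open>Increasing the demand\<close>

text \<open>Truncating the rank at \<open>\<delta>\<close> makes the vectors of total \<open>\<delta>\<close> the bases of a polymatroid.\<close>
definition trunc :: "('e set \<Rightarrow> nat) \<Rightarrow> nat \<Rightarrow> 'e set \<Rightarrow> nat" where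
  "trunc f \<delta> = (\<lambda>U. min (f U) \<delta>)"

lemma polymatroid_rank_trunc:
  assumes "polymatroid_rank E f"
  shows "polymatroid_rank E (trunc f \<delta>)"
proof -
  have mono: "\<And>U V. U \<subseteq> V \<Longrightarrow> V \<subseteq> E \<Longrightarrow> f U \<le> f V"
    and sub: "\<And>U V. U \<subseteq> E \<Longrightarrow> V \<subseteq> E \<Longrightarrow> f (U \<union> V) + f (U \<inter> V) \<le> f U + f V"
    using assms by (auto simp: polymatroid_rank_def)
  have "min (f (U \<union> V)) \<delta> + min (f (U \<inter> V)) \<delta> \<le> min (f U) \<delta> + min (f V) \<delta>"
    if "U \<subseteq> E" "V \<subseteq> E" for U V
    using sub[OF that] mono[of "U \<inter> V" U] mono[of "U \<inter> V" V] that by (simp add: min_def)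
  moreover have "min (f U) \<delta> \<le> min (f V) \<delta>" if "U \<subseteq> V" "V \<subseteq> E" for U V
    using mono[OF that] by (simp add: min_def)
  ultimately show ?thesis using assms unfolding polymatroid_rank_def trunc_def by auto
qed

lemma base_set_trunc:
  assumes "finite E" "\<delta> \<le> f E"
  shows "base_set E (trunc f \<delta>) (trunc f \<delta> E) = base_set E f \<delta>"
proof -
  have "sum x U \<le> \<delta>" if "x \<in> base_set E f \<delta>" "U \<subseteq> E" for x U
    using sum_mono2[OF assms(1) that(2), of x] that(1) unfolding base_set_def by auto
  then show ?thesis using assms(2) unfolding base_set_def trunc_def by auto
qed

lemma regular_polymatroid_trunc:
  assumes "finite E" "polymatroid_rank E f" "\<And>e. e \<in> E \<Longrightarrow> regular_cost (K e)"
  shows "regular_polymatroid E (trunc f \<delta>) K"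
  using assms polymatroid_rank_trunc by unfold_locales auto

lemma optimal_after_demand_increase:
  assumes fin: "finite E" and rank: "polymatroid_rank E f"
    and regular: "\<And>e. e \<in> E \<Longrightarrow> regular_cost (K e)"
    and oz: "is_optimal E (base_set E f \<delta>) K \<tau> z" and less: "\<delta> < f E"
  shows "\<exists>e\<in>E. is_optimal E (base_set E f (\<delta> + 1)) K (\<tau>(e := \<tau> e - 1)) (z(e := z e + 1))"
proof -
  interpret P: polymatroid E f using fin rank by unfold_locales
  interpret P1: regular_polymatroid E "trunc f (\<delta> + 1)" K
    using regular_polymatroid_trunc[OF fin rank regular] .
  let ?B0 = "base_set E f \<delta>" and ?B1 = "base_set E f (\<delta> + 1)"
  have B1: "P1.bases = ?B1" using base_set_trunc[OF fin] less by simp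
  have z: "z \<in> ?B0" using oz unfolding is_optimal_def by auto
  have lz: "marginal K \<tau> a (z a) \<le> marginal K \<tau> b (z b + 1)"
    if "a \<in> E" "b \<in> E" "a \<noteq> b" "1 \<le> z a" "move_unit z a b \<in> ?B0" for a b
    using optimal_imp_locally_optimal[OF fin oz] that unfolding is_locally_optimal_def by blast
  let ?G = "\<lambda>e. marginal K \<tau> e (z e + 1)"
  let ?targets = "{e \<in> E. z(e := z e + 1) \<in> ?B1}"
  have "?targets \<noteq> {}" using P.base_set_increment_exists[OF z less] by auto
  moreover have "finite ?targets" using fin by simp
  ultimately obtain e where e: "e \<in> ?targets" and least: "\<And>b. b \<in> ?targets \<Longrightarrow> ?G e \<le> ?G b"
    using ex_is_arg_min_if_finite[of ?targets ?G] unfolding is_arg_min_linorder by blast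
  define y where "y = z(e := z e + 1)"
  define \<tau>' where "\<tau>' = \<tau>(e := \<tau> e - 1)"
  have eE: "e \<in> E" and y: "y \<in> ?B1" using e unfolding y_def by auto
  have "is_locally_optimal E ?B1 K \<tau>' y"
    unfolding is_locally_optimal_def
  proof (intro ballI impI)
    fix a b assume ab: "a \<in> E" "b \<in> E" "a \<noteq> b" "1 \<le> y a" "move_unit y a b \<in> ?B1"
    show "marginal K \<tau>' a (y a) \<le> marginal K \<tau>' b (y b + 1)"
    proof (cases "a = e")
      case True
      have "move_unit y a b = z(b := z b + 1)"
        using True ab unfolding y_def by (auto simp: move_unit_def fun_eq_iff)
      then have "?G e \<le> ?G b" using least ab by simp
      moreover have "marg_cost (K e) (z e + 1) (\<tau> e - 1) \<le> ?G e"
        using regular_cost_mono_load[OF regular[OF eE], of "z e + 1" "\<tau> e - 1" "\<tau> e"]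
        by (simp add: marginal_def)
      ultimately show ?thesis using True ab unfolding y_def \<tau>'_def by (simp add: marginal_fun_upd)
    next
      case False
      have "1 \<le> move_unit y a b e" using False ab unfolding y_def by (auto simp: move_unit_def)
      then have "(move_unit y a b)(e := move_unit y a b e - 1) \<in> ?B0"
        using base_set_decrement[of "move_unit y a b" E f \<delta> e] ab eE fin by simp
      moreover have "(move_unit y a b)(e := move_unit y a b e - 1) = move_unit z a b"
        using False ab unfolding y_def by (auto simp: move_unit_def fun_eq_iff)
      ultimately have "marginal K \<tau> a (z a) \<le> marginal K \<tau> b (z b + 1)"
        using lz ab False unfolding y_def by simp
      moreover have "?G e \<le> marg_cost (K e) (z e + 2) (\<tau> e - 1)"
        using regular_cost_shift_down[OF regular[OF eE], of "z e + 1" "\<tau> e"]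
        by (simp add: marginal_def)
      ultimately show ?thesis
        using False unfolding y_def \<tau>'_def by (cases "b = e") (auto simp: marginal_fun_upd)
    qed
  qed
  then show ?thesis
    using y P1.optimal_iff_locally_optimal eE unfolding B1 y_def \<tau>'_def by blast
qed

section \<open>Polymatroid games\<close>

locale polymatroid_game =
  fixes N :: "'i set" and E :: "'e set" and f :: "'i \<Rightarrow> 'e set \<Rightarrow> nat"
    and C :: "'i \<Rightarrow> 'e \<Rightarrow> nat \<Rightarrow> nat \<Rightarrow> real"
  assumes finite_players: "finite N" and finite_resources: "finite E"
    and rank: "\<And>i. i \<in> N \<Longrightarrow> polymatroid_rank E (f i)"
    and regular: "\<And>i e. i \<in> N \<Longrightarrow> e \<in> E \<Longrightarrow> regular_cost (C i e)"
begin

definition load :: "('i \<Rightarrow> 'e \<Rightarrow> nat) \<Rightarrow> 'e \<Rightarrow> nat" where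
  "load x e = (\<Sum>j\<in>N. x j e)"

definition others :: "('i \<Rightarrow> 'e \<Rightarrow> nat) \<Rightarrow> 'i \<Rightarrow> 'e \<Rightarrow> nat" where
  "others x i e = (\<Sum>j\<in>N - {i}. x j e)"

definition strategies :: "('i \<Rightarrow> nat) \<Rightarrow> 'i \<Rightarrow> ('e \<Rightarrow> nat) set" where
  "strategies \<delta> i = base_set E (f i) (\<delta> i)"

definition best_response :: "('i \<Rightarrow> nat) \<Rightarrow> 'i \<Rightarrow> ('e \<Rightarrow> nat) \<Rightarrow> ('e \<Rightarrow> nat) \<Rightarrow> bool" where
  "best_response \<delta> i \<tau> z \<longleftrightarrow> is_optimal E (strategies \<delta> i) (C i) \<tau> z"

definition equilibrium :: "('i \<Rightarrow> nat) \<Rightarrow> ('i \<Rightarrow> 'e \<Rightarrow> nat) \<Rightarrow> bool" where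
  "equilibrium \<delta> x \<longleftrightarrow> x \<in> PiE N (strategies \<delta>) \<and> (\<forall>i\<in>N. best_response \<delta> i (others x i) (x i))"

text \<open>The profile is an equilibrium up to one unit of load on the marked resource \<open>c\<close>, which
  every player may discount. When the others have no load on \<open>c\<close>, truncated subtraction makes
  the update the identity.\<close>
definition almost_equilibrium :: "('i \<Rightarrow> nat) \<Rightarrow> ('i \<Rightarrow> 'e \<Rightarrow> nat) \<Rightarrow> 'e \<Rightarrow> bool" where
  "almost_equilibrium \<delta> x c \<longleftrightarrow> x \<in> PiE N (strategies \<delta>) \<and>
     (\<forall>i\<in>N. best_response \<delta> i ((others x i)(c := others x i c - 1)) (x i))"

lemma load_eq_others: "j \<in> N \<Longrightarrow> load x e = x j e + others x j e"
  unfolding load_def others_def using sum.remove[OF finite_players, of j "\<lambda>i. x i e"] by simp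

lemma load_fun_upd: "j \<in> N \<Longrightarrow> load (x(j := w)) e + x j e = load x e + w e"
  using sum_fun_upd_add[OF finite_players, of "\<lambda>i. x i e" j "w e"]
  unfolding load_def by (simp add: fun_upd_def if_distrib[of "\<lambda>h. h e"])

lemma others_fun_upd_self: "others (x(j := w)) j = others x j"
  unfolding others_def by (intro ext sum.cong) auto

lemma others_fun_upd_other:
  assumes "l \<noteq> j" "j \<in> N"
  shows "others (x(j := w)) l e + x j e = others x l e + w e"
  using sum_fun_upd_add[of "N - {l}" "\<lambda>i. x i e" j "w e"] finite_players assms
  unfolding others_def by (simp add: fun_upd_def if_distrib[of "\<lambda>h. h e"])

lemma others_ge: "j \<in> N \<Longrightarrow> l \<noteq> j \<Longrightarrow> x j e \<le> others x l e"
  unfolding others_def using member_le_sum[of j "N - {l}" "\<lambda>i. x i e"] finite_players by auto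

lemma strategies_eq_bases:
  "\<delta> i \<le> f i E \<Longrightarrow> strategies \<delta> i = base_set E (trunc (f i) (\<delta> i)) (trunc (f i) (\<delta> i) E)"
  unfolding strategies_def using base_set_trunc[OF finite_resources] by simp

lemma player_regular_polymatroid: "i \<in> N \<Longrightarrow> regular_polymatroid E (trunc (f i) d) (C i)"
  using regular_polymatroid_trunc[OF finite_resources rank] regular by blast

lemma best_response_after_load_increase:
  assumes "i \<in> N" "\<delta> i \<le> f i E" "best_response \<delta> i \<sigma> z" "c \<in> E"
    "\<not> best_response \<delta> i (\<sigma>(c := \<sigma> c + 1)) z"
  shows "\<exists>e\<in>E. e \<noteq> c \<and> 1 \<le> z c \<and> best_response \<delta> i (\<sigma>(c := \<sigma> c + 1)) (move_unit z c e)"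
  using regular_polymatroid.optimal_after_load_increase[OF player_regular_polymatroid, of i "\<delta> i" \<sigma> z c] assms
  unfolding best_response_def strategies_eq_bases[of \<delta> i, OF assms(2)] by blast

lemma best_response_move_unit_unload:
  assumes "i \<in> N" "\<delta> i \<le> f i E" "best_response \<delta> i \<sigma> y"
    "best_response \<delta> i (\<sigma>(c := \<sigma> c + 1)) (move_unit y c e)" "c \<in> E" "e \<in> E" "c \<noteq> e" "1 \<le> y c"
  shows "best_response \<delta> i ((\<sigma>(c := \<sigma> c + 1))(e := \<sigma> e - 1)) (move_unit y c e)"
  using regular_polymatroid.optimal_move_unit_unload[OF player_regular_polymatroid, of i "\<delta> i" \<sigma> y c e] assms
  unfolding best_response_def strategies_eq_bases[of \<delta> i, OF assms(2)] by blast

text \<open>A Rosenthal-type potential relative to base loads \<open>L\<close>: the \<open>k\<close>-th unit of player \<open>j\<close>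
  on \<open>e\<close> is charged against the others' load \<open>L e + 1 - k\<close>. This is exactly the load a player
  sees on its top unit on the marked resource (total load \<open>L e + 1\<close>) and on a unit it moves to
  an unmarked resource (total load \<open>L e\<close>), so an improving move lowers the potential.\<close>
definition potential :: "('e \<Rightarrow> nat) \<Rightarrow> ('i \<Rightarrow> 'e \<Rightarrow> nat) \<Rightarrow> real" where
  "potential L x = (\<Sum>j\<in>N. \<Sum>e\<in>E. \<Sum>k=1..x j e. marg_cost (C j e) k (L e + 1 - k))"

lemma potential_move_unit:
  assumes j: "j \<in> N" and ce: "c \<in> E" "e \<in> E" "c \<noteq> e" and pos: "1 \<le> x j c"
  shows "potential L (x(j := move_unit (x j) c e)) =
    potential L x - marg_cost (C j c) (x j c) (L c + 1 - x j c) + marg_cost (C j e) (x j e + 1) (L e - x j e)"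
proof -
  define Q where "Q i e' a (t::nat) = (\<Sum>k=1..a. marg_cost (C i e') k (L e' + 1 - k))" for i e' a t
  have pot: "potential L y = (\<Sum>i\<in>N. sep_cost E (Q i) (\<lambda>_. 0) (y i))" for y
    unfolding potential_def sep_cost_def Q_def ..
  have marg_Q: "marginal (Q j) (\<lambda>_. 0) e' k = marg_cost (C j e') k (L e' + 1 - k)" if "1 \<le> k" for e' k
    using that by (cases k) (simp_all add: marginal_def marg_cost_def Q_def)
  have "sep_cost E (Q j) (\<lambda>_. 0) (move_unit (x j) c e) = sep_cost E (Q j) (\<lambda>_. 0) (x j)
      - marg_cost (C j c) (x j c) (L c + 1 - x j c) + marg_cost (C j e) (x j e + 1) (L e - x j e)"
    using sep_cost_move_unit[of E c e "x j" "Q j" "\<lambda>_. 0"] finite_resources ce pos marg_Q by simp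
  moreover have "(\<Sum>i\<in>N - {j}. sep_cost E (Q i) (\<lambda>_. 0) ((x(j := w)) i)) =
      (\<Sum>i\<in>N - {j}. sep_cost E (Q i) (\<lambda>_. 0) (x i))" for w
    by (rule sum.cong) auto
  ultimately show ?thesis
    unfolding pot
    using sum.remove[OF finite_players j, of "\<lambda>i. sep_cost E (Q i) (\<lambda>_. 0) ((x(j := move_unit (x j) c e)) i)"]
      sum.remove[OF finite_players j, of "\<lambda>i. sep_cost E (Q i) (\<lambda>_. 0) (x i)"]
    by (simp del: fun_upd_apply add: fun_upd_same)
qed

lemma others_after_move_unit:
  assumes "l \<noteq> j" "j \<in> N" "c \<noteq> e" "1 \<le> x j c"
  defines "x' \<equiv> x(j := move_unit (x j) c e)"
  shows "(others x' l)(e := others x' l e - 1) = (others x l)(c := others x l c - 1)"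
proof
  fix e'
  have "others x' l e' + x j e' = others x l e' + move_unit (x j) c e e'"
    unfolding x'_def by (rule others_fun_upd_other[OF assms(1,2)])
  moreover have "x j c \<le> others x l c" using others_ge[OF assms(2,1)] .
  ultimately show "((others x' l)(e := others x' l e - 1)) e' = ((others x l)(c := others x l c - 1)) e'"
    using assms(3,4) by (cases "e' = c"; cases "e' = e") (auto simp: move_unit_apply)
qed

lemma almost_equilibrium_improving_move:
  assumes ae: "almost_equilibrium \<delta> x c" and c: "c \<in> E" and j: "j \<in> N"
    and demand: "\<And>i. i \<in> N \<Longrightarrow> \<delta> i \<le> f i E"
    and not_best: "\<not> best_response \<delta> j (others x j) (x j)"
  shows "\<exists>e\<in>E. e \<noteq> c \<and> 1 \<le> x j c \<and> almost_equilibrium \<delta> (x(j := move_unit (x j) c e)) e \<and>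
    marginal (C j) (others x j) e (x j e + 1) < marginal (C j) (others x j) c (x j c)"
proof -
  define \<tau> where "\<tau> = others x j"
  define \<sigma> where "\<sigma> = \<tau>(c := \<tau> c - 1)"
  have x: "x \<in> PiE N (strategies \<delta>)"
    and br: "\<And>i. i \<in> N \<Longrightarrow> best_response \<delta> i ((others x i)(c := others x i c - 1)) (x i)"
    using ae unfolding almost_equilibrium_def by auto
  have "1 \<le> \<tau> c"
  proof (rule ccontr)
    assume "\<not> 1 \<le> \<tau> c"
    then have "\<tau>(c := \<tau> c - 1) = \<tau>" by auto
    then show False using br[OF j] not_best unfolding \<tau>_def by simp
  qed
  then have \<sigma>_up: "\<sigma>(c := \<sigma> c + 1) = \<tau>" unfolding \<sigma>_def by auto
  have br_\<sigma>: "best_response \<delta> j \<sigma> (x j)" using br[OF j] unfolding \<sigma>_def \<tau>_def .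
  obtain e where e: "e \<in> E" "e \<noteq> c" "1 \<le> x j c"
    and br_w: "best_response \<delta> j \<tau> (move_unit (x j) c e)"
    using best_response_after_load_increase[OF j demand[OF j] br_\<sigma> c] not_best \<sigma>_up
    unfolding \<tau>_def by auto
  define w where "w = move_unit (x j) c e"
  define x' where "x' = x(j := w)"
  have "best_response \<delta> j (\<tau>(e := \<tau> e - 1)) w"
    using best_response_move_unit_unload[OF j demand[OF j] br_\<sigma>, of c e] br_w \<sigma>_up e c
    unfolding w_def \<sigma>_def by auto
  moreover have "best_response \<delta> l ((others x' l)(e := others x' l e - 1)) (x' l)" if "l \<in> N" "l \<noteq> j" for l
    using br[OF that(1)] others_after_move_unit[of l j c e x] that(2) j e
    unfolding x'_def w_def by simp
  moreover have "w \<in> strategies \<delta> j" using br_w unfolding best_response_def is_optimal_def w_def by auto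
  ultimately have "almost_equilibrium \<delta> x' e"
    using x j others_fun_upd_self[of x j w] unfolding almost_equilibrium_def x'_def \<tau>_def
    by (auto simp: PiE_def extensional_def Pi_def)
  moreover have "marginal (C j) \<tau> e (x j e + 1) < marginal (C j) \<tau> c (x j c)"
  proof -
    have xj: "x j \<in> strategies \<delta> j" using x j by auto
    obtain y where "y \<in> strategies \<delta> j" "sep_cost E (C j) \<tau> y < sep_cost E (C j) \<tau> (x j)"
      using not_best xj unfolding best_response_def is_optimal_def \<tau>_def by (auto simp: not_le)
    moreover have "sep_cost E (C j) \<tau> w \<le> sep_cost E (C j) \<tau> y"
      using br_w calculation(1) unfolding best_response_def is_optimal_def w_def by auto
    ultimately show ?thesis
      using sep_cost_move_unit[of E c e "x j" "C j" \<tau>] finite_resources c e unfolding w_def by simp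
  qed
  ultimately show ?thesis using e unfolding x'_def w_def \<tau>_def by blast
qed

lemma equilibrium_from_almost_equilibrium:
  assumes demand: "\<And>i. i \<in> N \<Longrightarrow> \<delta> i \<le> f i E"
    and ae: "almost_equilibrium \<delta> x\<^sub>0 c\<^sub>0" "c\<^sub>0 \<in> E"
    and load\<^sub>0: "\<And>e. e \<in> E \<Longrightarrow> load x\<^sub>0 e = L e + (if e = c\<^sub>0 then 1 else 0)"
  shows "\<exists>x. equilibrium \<delta> x"
proof -
  define S where "S = {(x, c). c \<in> E \<and> almost_equilibrium \<delta> x c \<and>
    (\<forall>e\<in>E. load x e = L e + (if e = c then 1 else 0))}"
  have "S \<subseteq> PiE N (strategies \<delta>) \<times> E" unfolding S_def almost_equilibrium_def by auto
  moreover have "finite (PiE N (strategies \<delta>))"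
    using finite_players finite_resources finite_base_set unfolding strategies_def by (intro finite_PiE) auto
  ultimately have "finite S" using finite_resources finite_subset by blast
  moreover have "(x\<^sub>0, c\<^sub>0) \<in> S" unfolding S_def using ae load\<^sub>0 by auto
  ultimately obtain x c where xc: "(x, c) \<in> S"
    and least: "\<And>x' c'. (x', c') \<in> S \<Longrightarrow> potential L x \<le> potential L x'"
    using ex_is_arg_min_if_finite[of S "\<lambda>s. potential L (fst s)"] unfolding is_arg_min_linorder by force
  have c: "c \<in> E" and x_ae: "almost_equilibrium \<delta> x c"
    and load: "\<And>e. e \<in> E \<Longrightarrow> load x e = L e + (if e = c then 1 else 0)"
    using xc unfolding S_def by auto
  have "best_response \<delta> j (others x j) (x j)" if j: "j \<in> N" for j
  proof (rule ccontr)
    assume "\<not> best_response \<delta> j (others x j) (x j)"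
    then obtain e where e: "e \<in> E" "e \<noteq> c" "1 \<le> x j c"
      and ae': "almost_equilibrium \<delta> (x(j := move_unit (x j) c e)) e"
      and improving: "marginal (C j) (others x j) e (x j e + 1) < marginal (C j) (others x j) c (x j c)"
      using almost_equilibrium_improving_move[OF x_ae c j demand] by blast
    let ?x' = "x(j := move_unit (x j) c e)"
    have "load ?x' e' = L e' + (if e' = e then 1 else 0)" if "e' \<in> E" for e'
      using load_fun_upd[OF j, of x "move_unit (x j) c e" e'] load[OF that] e
      by (cases "e' = c"; cases "e' = e") (auto simp: move_unit_apply)
    then have "(?x', e) \<in> S" unfolding S_def using e ae' by auto
    moreover have "L c + 1 - x j c = others x j c" "L e - x j e = others x j e"
      using load[OF c] load[OF e(1)] load_eq_others[OF j, of x] e by auto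
    then have "potential L ?x' < potential L x"
      using potential_move_unit[of j c e x L] j c e improving
      by (simp add: marginal_def)
    ultimately show False using least by fastforce
  qed
  then show ?thesis using x_ae unfolding equilibrium_def almost_equilibrium_def by auto
qed

lemma almost_equilibrium_after_demand_increase:
  assumes eq: "equilibrium \<delta> x" and k: "k \<in> N" and less: "\<delta> k < f k E"
  shows "\<exists>x' c. c \<in> E \<and> almost_equilibrium (\<delta>(k := \<delta> k + 1)) x' c \<and>
    (\<forall>e\<in>E. load x' e = load x e + (if e = c then 1 else 0))"
proof -
  define \<delta>' where "\<delta>' = \<delta>(k := \<delta> k + 1)"
  have x: "x \<in> PiE N (strategies \<delta>)" and br: "\<And>i. i \<in> N \<Longrightarrow> best_response \<delta> i (others x i) (x i)"
    using eq unfolding equilibrium_def by auto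
  have "\<And>e. e \<in> E \<Longrightarrow> regular_cost (C k e)" using regular k by blast
  then obtain c where c: "c \<in> E" and br_k: "is_optimal E (base_set E (f k) (\<delta> k + 1)) (C k)
      ((others x k)(c := others x k c - 1)) ((x k)(c := x k c + 1))"
    using optimal_after_demand_increase[OF finite_resources rank[OF k] _ _ less] br[OF k]
    unfolding best_response_def strategies_def by blast
  define x' where "x' = x(k := (x k)(c := x k c + 1))"
  have strategies': "strategies \<delta>' k = base_set E (f k) (\<delta> k + 1)"
    "\<And>i. i \<noteq> k \<Longrightarrow> strategies \<delta>' i = strategies \<delta> i"
    unfolding strategies_def \<delta>'_def by auto
  have "best_response \<delta>' k ((others x' k)(c := others x' k c - 1)) (x' k)"
    using br_k strategies' others_fun_upd_self[of x k] unfolding best_response_def x'_def by simp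
  moreover have "best_response \<delta>' i ((others x' i)(c := others x' i c - 1)) (x' i)"
    if "i \<in> N" "i \<noteq> k" for i
  proof -
    have upd: "others x' i e + x k e = others x i e + ((x k)(c := x k c + 1)) e" for e
      unfolding x'_def by (rule others_fun_upd_other[OF that(2) k])
    have "(others x' i)(c := others x' i c - 1) = others x i"
    proof
      fix e show "((others x' i)(c := others x' i c - 1)) e = others x i e"
        using upd[of e] by (cases "e = c") auto
    qed
    then show ?thesis using br[OF that(1)] strategies'(2)[OF that(2)] that(2)
      unfolding best_response_def x'_def by simp
  qed
  moreover have "x' \<in> PiE N (strategies \<delta>')"
    using x k br_k strategies' unfolding x'_def is_optimal_def by (auto simp: PiE_def extensional_def Pi_def)
  moreover have "load x' e = load x e + (if e = c then 1 else 0)" for e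
    using load_fun_upd[OF k, of x "(x k)(c := x k c + 1)" e] unfolding x'_def by auto
  ultimately show ?thesis
    using c unfolding almost_equilibrium_def \<delta>'_def by blast
qed

lemma equilibrium_zero_demand:
  assumes "\<And>i. i \<in> N \<Longrightarrow> \<delta> i = 0"
  shows "equilibrium \<delta> (\<lambda>i\<in>N. \<lambda>e\<in>E. 0)"
proof -
  have strategies: "strategies \<delta> i = {\<lambda>e\<in>E. 0}" if "i \<in> N" for i
  proof -
    have "y \<in> strategies \<delta> i \<longleftrightarrow> y \<in> E \<rightarrow>\<^sub>E UNIV \<and> (\<forall>e\<in>E. y e = 0)" for y
      using assms[OF that] finite_resources sum_eq_0_iff[of _ y]
      unfolding strategies_def base_set_def by (auto simp: subset_eq intro: finite_subset)
    then show ?thesis by (auto simp: PiE_def extensional_def fun_eq_iff)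
  qed
  then have "best_response \<delta> i \<tau> (\<lambda>e\<in>E. 0)" if "i \<in> N" for i \<tau>
    using that unfolding best_response_def is_optimal_def by simp
  then show ?thesis using strategies unfolding equilibrium_def by auto
qed

theorem equilibrium_exists:
  assumes "\<And>i. i \<in> N \<Longrightarrow> \<delta> i \<le> f i E"
  shows "\<exists>x. equilibrium \<delta> x"
  using assms
proof (induction "\<Sum>i\<in>N. \<delta> i" arbitrary: \<delta>)
  case 0
  then show ?case using equilibrium_zero_demand finite_players by fastforce
next
  case (Suc s)
  then have "\<exists>k\<in>N. \<delta> k \<noteq> 0" by (metis sum.neutral nat.distinct(1))
  then obtain k where k: "k \<in> N" "1 \<le> \<delta> k" by auto
  define \<delta>' where "\<delta>' = \<delta>(k := \<delta> k - 1)"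
  have "sum \<delta>' N + \<delta> k = sum \<delta> N + (\<delta> k - 1)"
    using sum_fun_upd_add[OF finite_players, of \<delta> k "\<delta> k - 1"] k unfolding \<delta>'_def by simp
  then have "s = sum \<delta>' N" using Suc.hyps(2) k by simp
  moreover have "\<And>i. i \<in> N \<Longrightarrow> \<delta>' i \<le> f i E"
    using Suc.prems unfolding \<delta>'_def by (auto intro: order.trans[OF diff_le_self])
  ultimately obtain x where x: "equilibrium \<delta>' x" using Suc.hyps(1) by blast
  have "\<delta>' k < f k E" "\<delta>'(k := \<delta>' k + 1) = \<delta>"
    using Suc.prems[OF k(1)] k unfolding \<delta>'_def by auto
  then obtain x' c where "c \<in> E" "almost_equilibrium \<delta> x' c"
    "\<forall>e\<in>E. load x' e = load x e + (if e = c then 1 else 0)"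
    using almost_equilibrium_after_demand_increase[OF x k(1)] by auto
  then show ?case using equilibrium_from_almost_equilibrium[OF Suc.prems] by metis
qed

end

theorem theorem5p1:
  fixes n m :: nat
    and f :: "nat \<Rightarrow> nat set \<Rightarrow> nat"
    and d :: "nat \<Rightarrow> nat"
    and C :: "nat \<Rightarrow> nat \<Rightarrow> nat \<Rightarrow> nat \<Rightarrow> real"
  assumes rank: "\<And>i. i \<in> {1..n} \<Longrightarrow> polymatroid_rank {1..m} (f i)"
    and demand: "\<And>i. i \<in> {1..n} \<Longrightarrow> d i \<le> f i {1..m}"
    and nonneg: "\<And>i e a t. i \<in> {1..n} \<Longrightarrow> e \<in> {1..m} \<Longrightarrow> C i e a t \<ge> 0"
    and regular: "\<And>i e. i \<in> {1..n} \<Longrightarrow> e \<in> {1..m} \<Longrightarrow> regular_cost (C i e)"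
  shows "\<exists>x. (\<forall>i\<in>{1..n}. x i \<in> base_set {1..m} (f i) (d i)) \<and>
             (\<forall>i\<in>{1..n}. \<forall>y\<in>base_set {1..m} (f i) (d i).
                private_cost {1..n} {1..m} C x i \<le> private_cost {1..n} {1..m} C (x(i := y)) i)"
proof -
  interpret G: polymatroid_game "{1..n}" "{1..m}" f C
    using rank regular by unfold_locales auto
  obtain x where x: "G.equilibrium d x" using G.equilibrium_exists demand by blast
  have cost: "private_cost {1..n} {1..m} C z i = sep_cost {1..m} (C i) (G.others z i) (z i)" for z i
    unfolding private_cost_def sep_cost_def G.others_def ..
  show ?thesis
  proof (intro exI conjI ballI)
    fix i assume i: "i \<in> {1..n}"
    then show "x i \<in> base_set {1..m} (f i) (d i)"
      using x unfolding G.equilibrium_def G.strategies_def by auto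
    fix y assume y: "y \<in> base_set {1..m} (f i) (d i)"
    have "G.best_response d i (G.others x i) (x i)"
      using x i unfolding G.equilibrium_def by blast
    then show "private_cost {1..n} {1..m} C x i \<le> private_cost {1..n} {1..m} C (x(i := y)) i"
      using y unfolding cost G.others_fun_upd_self G.best_response_def is_optimal_def G.strategies_def
      by simp
  qed
qed

end
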